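(* Let $\mu$ be an exterior $3$-form in a $6$-dimensional real vector space $V$, let $\xi^1,\dots,\xi^6$ be a basis of $V^*$, and let $H'$ be the set of all $\xi\in V^*$ such that the $4$-form $\xi\wedge\mu$ is decomposable. (i) If $\mu=\xi^1\wedge\xi^2\wedge\xi^3+\xi^3\wedge\xi^4\wedge\xi^5+\xi^5\wedge\xi^6\wedge\xi^1$, then $H'$ equals the linear span of $\xi^1,\xi^3,\xi^5$. (ii) If $\mu=\xi^1\wedge\xi^2\wedge\xi^3+\xi^4\wedge\xi^5\wedge\xi^6$, then $H'$ is the set-theoretic union of the span of $\xi^1,\xi^2,\xi^3$ and the span of $\xi^4,\xi^5,\xi^6$.
   Context: A $p$-form is decomposable if it is an exterior product of $p$ $1$-forms (the zero form counts as decomposable). *)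

theory Defs
  imports "HOL-Analysis.Analysis"
begin

text \<open>Exterior p-forms on a real vector space V are modelled as alternating
multilinear functions of p vector arguments; the arguments are supplied as a
sequence v :: nat => V of which only v 0, ..., v (p-1) are used.\<close>

type_synonym 'v form = "(nat \<Rightarrow> 'v) \<Rightarrow> real"

definition wedge_list :: "('v \<Rightarrow> real) list \<Rightarrow> 'v form" where
  "wedge_list as v =
     (\<Sum>p | p permutes {..<length as}.
        of_int (sign p) * (\<Prod>i<length as. (as ! i) (v (p i))))"

definition drop_arg :: "nat \<Rightarrow> (nat \<Rightarrow> 'v) \<Rightarrow> (nat \<Rightarrow> 'v)" where
  "drop_arg j v = (\<lambda>i. if i < j then v i else v (Suc i))"

definition wedge1 :: "('v \<Rightarrow> real) \<Rightarrow> nat \<Rightarrow> 'v form \<Rightarrow> 'v form" where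
  "wedge1 \<xi> k w v = (\<Sum>j\<le>k. (-1) ^ j * \<xi> (v j) * w (drop_arg j v))"

text \<open>A p-form is decomposable if it is an exterior product of p 1-forms
(the zero form is included, taking a zero factor).\<close>
definition decomposable :: "nat \<Rightarrow> ('v::real_vector) form \<Rightarrow> bool" where
  "decomposable p w \<longleftrightarrow>
     (\<exists>as. length as = p \<and> (\<forall>a\<in>set as. linear a) \<and> (\<forall>v. w v = wedge_list as v))"

end

theory Submission
  imports Defs "Jordan_Normal_Form.Determinant"
begin

(* If \<Omega> = f\<^sub>1 \<and> f\<^sub>2 \<and> f\<^sub>3 \<and> f\<^sub>4 is decomposable, then for fixed x, y the 2-form
\<omega>(a, b) = \<Omega>(x, y, a, b) is decomposable as well, so it satisfies the Pluecker relation
\<omega>(a,b) \<omega>(c,d) - \<omega>(a,c) \<omega>(b,d) + \<omega>(a,d) \<omega>(b,c) = 0.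
Evaluating this relation for \<Omega> = \<eta> \<and> \<mu> on vectors u\<^sub>j of the basis dual to \<xi>\<^sup>1, ..., \<xi>\<^sup>6
gives \<eta>(u\<^sub>2) = \<eta>(u\<^sub>4) = \<eta>(u\<^sub>6) = 0 in case (i), and \<eta>(u\<^sub>i) \<eta>(u\<^sub>j) = 0 for i \<le> 3 < j in
case (ii). Conversely, the claimed covectors give explicit factorisations:
(a\<xi>\<^sup>1 + b\<xi>\<^sup>3 + c\<xi>\<^sup>5) \<and> \<mu> = \<xi>\<^sup>1 \<and> \<xi>\<^sup>3 \<and> \<xi>\<^sup>5 \<and> (-a\<xi>\<^sup>4 - b\<xi>\<^sup>6 - c\<xi>\<^sup>2) in case (i), and
\<eta> \<and> \<mu> = \<eta> \<and> \<xi>\<^sup>4 \<and> \<xi>\<^sup>5 \<and> \<xi>\<^sup>6 for \<eta> in the span of \<xi>\<^sup>1, \<xi>\<^sup>2, \<xi>\<^sup>3 in case (ii). *)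

lemma linear_functional_eq_inner:
  fixes f :: "'v::euclidean_space \<Rightarrow> real"
  assumes "linear f"
  shows "f x = x \<bullet> adjoint f 1"
  using adjoint_works[OF assms] by simp

lemma functionals_common_zero_exists:
  fixes \<xi> :: "'i \<Rightarrow> 'v::euclidean_space \<Rightarrow> real"
  assumes "finite K" "card K < DIM('v)" "\<And>k. k \<in> K \<Longrightarrow> linear (\<xi> k)"
  shows "\<exists>z. z \<noteq> 0 \<and> (\<forall>k\<in>K. \<xi> k z = 0)"
proof -
  let ?W = "(\<lambda>k. adjoint (\<xi> k) 1) ` K"
  have "dim ?W \<le> card K"
    using \<open>finite K\<close> by (metis dim_le_card' card_image_le finite_imageI le_trans)
  then have "dim ?W < DIM('v)"
    using assms(2) by linarith
  then obtain z where "z \<noteq> 0" and orth: "\<And>y. y \<in> span ?W \<Longrightarrow> real_inner_class.orthogonal z y"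
    by (rule orthogonal_to_subspace_exists) auto
  have "\<xi> k z = 0" if "k \<in> K" for k
    using orth[of "adjoint (\<xi> k) 1"] that linear_functional_eq_inner[OF assms(3)[OF that]]
    by (auto simp: real_inner_class.orthogonal_def inner_commute span_base)
  with \<open>z \<noteq> 0\<close> show ?thesis
    by blast
qed

lemma independent_functionals_separate_points:
  fixes \<xi> :: "'i \<Rightarrow> 'v::euclidean_space \<Rightarrow> real"
  assumes "finite I" "card I = DIM('v)" and lin: "\<And>i. i \<in> I \<Longrightarrow> linear (\<xi> i)"
    and indep: "\<And>c. (\<forall>x. (\<Sum>i\<in>I. c i * \<xi> i x) = 0) \<Longrightarrow> (\<forall>i\<in>I. c i = 0)"
    and zero: "\<And>i. i \<in> I \<Longrightarrow> \<xi> i x = 0"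
  shows "x = 0"
proof -
  define w where "w i = adjoint (\<xi> i) 1" for i
  have \<xi>_w: "\<xi> i y = y \<bullet> w i" if "i \<in> I" for i y
    unfolding w_def by (rule linear_functional_eq_inner[OF lin[OF that]])
  have coeffs_zero: "\<forall>i\<in>I. c i = 0" if "(\<Sum>i\<in>I. c i *\<^sub>R w i) = 0" for c
  proof (rule indep, rule allI)
    fix y
    have "(\<Sum>i\<in>I. c i * \<xi> i y) = y \<bullet> (\<Sum>i\<in>I. c i *\<^sub>R w i)"
      by (simp add: \<xi>_w inner_sum_right mult.commute)
    then show "(\<Sum>i\<in>I. c i * \<xi> i y) = 0"
      using that by simp
  qed
  have inj: "inj_on w I"
  proof (rule inj_onI, rule ccontr)
    fix i k assume ik: "i \<in> I" "k \<in> I" "w i = w k" "i \<noteq> k"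
    define c where "c l = (if l = i then 1 else if l = k then -1 else (0::real))" for l
    have "(\<Sum>l\<in>I. c l *\<^sub>R w l) = (\<Sum>l\<in>{i, k}. c l *\<^sub>R w l)"
      by (rule sum.mono_neutral_right) (use ik \<open>finite I\<close> in \<open>auto simp: c_def\<close>)
    also have "\<dots> = 0"
      using ik by (simp add: c_def)
    finally have "c i = 0"
      using coeffs_zero ik(1) by blast
    then show False
      by (simp add: c_def)
  qed
  have "independent (w ` I)"
  proof (rule independent_if_scalars_zero)
    fix c y assume "(\<Sum>v\<in>w ` I. c v *\<^sub>R v) = 0" "y \<in> w ` I"
    then show "c y = 0"
      using coeffs_zero[of "c \<circ> w"] by (auto simp: sum.reindex[OF inj])
  qed (use \<open>finite I\<close> in simp)
  then have span: "span (w ` I) = UNIV"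
    using card_ge_dim_independent[of "w ` I" UNIV] card_image[OF inj] assms(2)
    by (auto simp: dim_UNIV)
  have "real_inner_class.orthogonal x x"
    by (rule orthogonal_to_span[of x "w ` I" x])
      (auto simp: span real_inner_class.orthogonal_def \<xi>_w[symmetric] zero)
  then show ?thesis
    by (simp add: real_inner_class.orthogonal_def)
qed

lemma dual_basis_exists:
  fixes \<xi> :: "'i \<Rightarrow> 'v::euclidean_space \<Rightarrow> real"
  assumes "finite I" "card I = DIM('v)" and lin: "\<And>i. i \<in> I \<Longrightarrow> linear (\<xi> i)"
    and indep: "\<And>c. (\<forall>x. (\<Sum>i\<in>I. c i * \<xi> i x) = 0) \<Longrightarrow> (\<forall>i\<in>I. c i = 0)"
  obtains u where "\<And>i j. i \<in> I \<Longrightarrow> j \<in> I \<Longrightarrow> \<xi> i (u j) = (if i = j then 1 else 0)"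
    and "\<And>x. x = (\<Sum>j\<in>I. \<xi> j x *\<^sub>R u j)"
proof -
  have separate: "x = 0" if "\<And>i. i \<in> I \<Longrightarrow> \<xi> i x = 0" for x
    using assms(1,2) lin indep that by (rule independent_functionals_separate_points)
  have "\<exists>v. \<forall>i\<in>I. \<xi> i v = (if i = j then 1 else 0)" if "j \<in> I" for j
  proof -
    have "finite (I - {j})" "card (I - {j}) < DIM('v)" "\<And>k. k \<in> I - {j} \<Longrightarrow> linear (\<xi> k)"
      using that assms(1,2) lin by (simp_all add: card_Diff_singleton)
    then have "\<exists>z. z \<noteq> 0 \<and> (\<forall>k\<in>I - {j}. \<xi> k z = 0)"
      by (rule functionals_common_zero_exists)
    then obtain z where "z \<noteq> 0" and z: "\<And>k. k \<in> I - {j} \<Longrightarrow> \<xi> k z = 0"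
      by blast
    have "\<xi> j z \<noteq> 0"
    proof
      assume "\<xi> j z = 0"
      with z have "\<And>i. i \<in> I \<Longrightarrow> \<xi> i z = 0"
        by blast
      then have "z = 0"
        by (rule separate)
      with \<open>z \<noteq> 0\<close> show False ..
    qed
    then show ?thesis
      using z lin by (intro exI[of _ "z /\<^sub>R \<xi> j z"]) (auto simp: linear_scale)
  qed
  then obtain u where u: "\<And>i j. i \<in> I \<Longrightarrow> j \<in> I \<Longrightarrow> \<xi> i (u j) = (if i = j then 1 else 0)"
    by metis
  moreover have "x = (\<Sum>j\<in>I. \<xi> j x *\<^sub>R u j)" for x
  proof -
    have "\<xi> i (x - (\<Sum>j\<in>I. \<xi> j x *\<^sub>R u j)) = 0" if "i \<in> I" for i
    proof -
      have "\<xi> i (\<Sum>j\<in>I. \<xi> j x *\<^sub>R u j) = (\<Sum>j\<in>I. \<xi> j x * (if i = j then 1 else 0))"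
        using lin[OF that] u[OF that] by (simp add: linear_sum linear_scale)
      also have "\<dots> = \<xi> i x"
        using that \<open>finite I\<close> by (simp add: if_distrib[of "\<lambda>t. _ * t"] cong: if_cong)
      finally show ?thesis
        using lin[OF that] by (simp add: linear_diff)
    qed
    then show ?thesis
      using separate by fastforce
  qed
  ultimately show ?thesis
    by (rule that)
qed

lemma wedge_list_eq_det:
  "wedge_list as v = det (mat (length as) (length as) (\<lambda>(i, j). (as ! i) (v j)))"
  unfolding wedge_list_def
  by (subst det_def'[of _ "length as"]) (auto simp: atLeast0LessThan intro!: sum.cong prod.cong)

lemma wedge_list_Nil [simp]: "wedge_list [] v = 1"
  unfolding wedge_list_def by simp

lemma wedge_list_Cons:
  "wedge_list (a # as) v = (\<Sum>j\<le>length as. (-1) ^ j * a (v j) * wedge_list as (drop_arg j v))"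
proof -
  let ?n = "length as"
  let ?A = "mat (Suc ?n) (Suc ?n) (\<lambda>(i, j). ((a # as) ! i) (v j))"
  have "wedge_list (a # as) v = det ?A"
    by (simp add: wedge_list_eq_det)
  also have "\<dots> = (\<Sum>j<Suc ?n. ?A $$ (0, j) * cofactor ?A 0 j)"
    by (rule laplace_expansion_row) auto
  also have "\<dots> = (\<Sum>j\<le>?n. (-1) ^ j * a (v j) * wedge_list as (drop_arg j v))"
  proof (rule sum.cong)
    fix j assume j: "j \<in> {..?n}"
    have "mat_delete ?A 0 j = mat ?n ?n (\<lambda>(i, k). (as ! i) (drop_arg j v k))"
      unfolding mat_delete_def by (rule eq_matI) (auto simp: drop_arg_def)
    then show "?A $$ (0, j) * cofactor ?A 0 j = (-1) ^ j * a (v j) * wedge_list as (drop_arg j v)"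
      using j unfolding cofactor_def by (simp add: wedge_list_eq_det)
  qed (auto simp: lessThan_Suc_atMost)
  finally show ?thesis .
qed

(* Arguments beyond the fourth repeat b, so that dropping any argument of args4 x y a b
   yields again a sequence of the form args4. *)
definition args4 :: "'v \<Rightarrow> 'v \<Rightarrow> 'v \<Rightarrow> 'v \<Rightarrow> nat \<Rightarrow> 'v" where
  "args4 x y a b i = (if i = 0 then x else if i = 1 then y else if i = 2 then a else b)"

lemma wedge_list4_pluecker:
  fixes f1 f2 f3 f4 :: "'v \<Rightarrow> real"
  shows "wedge_list [f1, f2, f3, f4] (args4 x y a b) * wedge_list [f1, f2, f3, f4] (args4 x y c d)
    - wedge_list [f1, f2, f3, f4] (args4 x y a c) * wedge_list [f1, f2, f3, f4] (args4 x y b d)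
    + wedge_list [f1, f2, f3, f4] (args4 x y a d) * wedge_list [f1, f2, f3, f4] (args4 x y b c) = 0"
  by (simp add: wedge_list_Cons drop_arg_def args4_def numeral_eq_Suc) Groebner_Basis.algebra

lemma decomposable4_pluecker:
  assumes "decomposable 4 \<Omega>"
  shows "\<Omega> (args4 x y a b) * \<Omega> (args4 x y c d) - \<Omega> (args4 x y a c) * \<Omega> (args4 x y b d)
    + \<Omega> (args4 x y a d) * \<Omega> (args4 x y b c) = 0"
proof -
  obtain as where "length as = 4" and \<Omega>: "\<And>v. \<Omega> v = wedge_list as v"
    using assms unfolding decomposable_def by blast
  then obtain f1 f2 f3 f4 where "as = [f1, f2, f3, f4]"
    by (auto simp: numeral_eq_Suc length_Suc_conv)
  then show ?thesis
    unfolding \<Omega> by (rule ssubst) (rule wedge_list4_pluecker)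
qed

lemma wedge1_args4:
  "wedge1 \<eta> 3 w (args4 x y a b) =
     \<eta> x * w (args4 y a b b) - \<eta> y * w (args4 x a b b) + \<eta> a * w (args4 x y b b) - \<eta> b * w (args4 x y a b)"
proof -
  have "drop_arg 0 (args4 x y a b) = args4 y a b b" "drop_arg 1 (args4 x y a b) = args4 x a b b"
       "drop_arg 2 (args4 x y a b) = args4 x y b b" "drop_arg 3 (args4 x y a b) = args4 x y a b"
    by (auto simp: drop_arg_def args4_def fun_eq_iff)
  then show ?thesis
    by (simp add: wedge1_def numeral_eq_Suc) (simp add: args4_def)
qed

lemma wedge_list3_args4:
  "wedge_list [f, g, h] (args4 x y a b) =
     f x * (g y * h a - g a * h y) - f y * (g x * h a - g a * h x) + f a * (g x * h y - g y * h x)"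
  by (simp add: wedge_list_Cons drop_arg_def args4_def numeral_eq_Suc)

definition decomposing_covectors :: "'v::real_vector form \<Rightarrow> ('v \<Rightarrow> real) set" where
  "decomposing_covectors \<mu> = {\<eta>. linear \<eta> \<and> decomposable 4 (wedge1 \<eta> 3 \<mu>)}"

lemma decomposing_covectorsI:
  assumes "linear \<eta>" "length as = 4" "\<forall>f\<in>set as. linear f"
    and "\<And>v. wedge1 \<eta> 3 \<mu> v = wedge_list as v"
  shows "\<eta> \<in> decomposing_covectors \<mu>"
  using assms unfolding decomposing_covectors_def decomposable_def by blast

locale dual_frame6 =
  fixes \<xi> :: "nat \<Rightarrow> 'v::real_vector \<Rightarrow> real" and u :: "nat \<Rightarrow> 'v"
  assumes linear_coord: "\<And>i. i \<in> {1..6} \<Longrightarrow> linear (\<xi> i)"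
    and dual: "\<And>i j. i \<in> {1..6} \<Longrightarrow> j \<in> {1..6} \<Longrightarrow> \<xi> i (u j) = (if i = j then 1 else 0)"
    and expansion: "\<And>x. x = (\<Sum>j=1..6. \<xi> j x *\<^sub>R u j)"
begin

definition cyclic_form :: "'v form" where
  "cyclic_form v = wedge_list [\<xi> 1, \<xi> 2, \<xi> 3] v + wedge_list [\<xi> 3, \<xi> 4, \<xi> 5] v
     + wedge_list [\<xi> 5, \<xi> 6, \<xi> 1] v"

definition split_form :: "'v form" where
  "split_form v = wedge_list [\<xi> 1, \<xi> 2, \<xi> 3] v + wedge_list [\<xi> 4, \<xi> 5, \<xi> 6] v"

lemma linear_expansion:
  assumes "linear \<eta>"
  shows "\<eta> = (\<lambda>x. \<eta> (u 1) * \<xi> 1 x + \<eta> (u 2) * \<xi> 2 x + \<eta> (u 3) * \<xi> 3 x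
                 + \<eta> (u 4) * \<xi> 4 x + \<eta> (u 5) * \<xi> 5 x + \<eta> (u 6) * \<xi> 6 x)"
proof
  fix x
  have "\<eta> x = \<eta> (\<Sum>j=1..6. \<xi> j x *\<^sub>R u j)"
    by (rule arg_cong[OF expansion])
  also have "\<dots> = (\<Sum>j=1..6. \<eta> (u j) * \<xi> j x)"
    using assms by (simp add: linear_sum linear_scale mult.commute)
  finally show "\<eta> x = \<eta> (u 1) * \<xi> 1 x + \<eta> (u 2) * \<xi> 2 x + \<eta> (u 3) * \<xi> 3 x
                 + \<eta> (u 4) * \<xi> 4 x + \<eta> (u 5) * \<xi> 5 x + \<eta> (u 6) * \<xi> 6 x"
    by (simp add: numeral_eq_Suc add.assoc)
qed

lemma linear_combination3:
  assumes "i \<in> {1..6}" "j \<in> {1..6}" "k \<in> {1..6}"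
  shows "linear (\<lambda>x. a * \<xi> i x + b * \<xi> j x + c * \<xi> k x)"
  using linear_compose_scale_right[OF linear_coord[OF assms(1)], of a]
    linear_compose_scale_right[OF linear_coord[OF assms(2)], of b]
    linear_compose_scale_right[OF linear_coord[OF assms(3)], of c]
  by (simp add: linear_compose_add)

lemma decomposing_covectors_cyclic:
  "decomposing_covectors cyclic_form = {\<lambda>x. a * \<xi> 1 x + b * \<xi> 3 x + c * \<xi> 5 x | a b c. True}"
proof (intro Set.set_eqI iffI)
  fix \<eta> assume "\<eta> \<in> decomposing_covectors cyclic_form"
  then have "linear \<eta>" and "decomposable 4 (wedge1 \<eta> 3 cyclic_form)"
    by (auto simp: decomposing_covectors_def)
  note pluecker = decomposable4_pluecker[OF this(2)]
  note evaluate = wedge1_args4 cyclic_form_def wedge_list3_args4 dual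
  have "\<eta> (u 2) = 0"
    using pluecker[of "u 2" "u 5" "u 3" "u 4" "u 1" "u 6"] by (simp add: evaluate)
  moreover have "\<eta> (u 4) = 0"
    using pluecker[of "u 1" "u 4" "u 5" "u 6" "u 2" "u 3"] by (simp add: evaluate)
  moreover have "\<eta> (u 6) = 0"
    using pluecker[of "u 3" "u 6" "u 1" "u 2" "u 4" "u 5"] by (simp add: evaluate)
  ultimately have "\<eta> = (\<lambda>x. \<eta> (u 1) * \<xi> 1 x + \<eta> (u 3) * \<xi> 3 x + \<eta> (u 5) * \<xi> 5 x)"
    using linear_expansion[OF \<open>linear \<eta>\<close>] by simp
  then show "\<eta> \<in> {\<lambda>x. a * \<xi> 1 x + b * \<xi> 3 x + c * \<xi> 5 x | a b c. True}"
    by blast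
next
  fix \<eta> assume "\<eta> \<in> {\<lambda>x. a * \<xi> 1 x + b * \<xi> 3 x + c * \<xi> 5 x | a b c. True}"
  then obtain a b c where \<eta>: "\<eta> = (\<lambda>x. a * \<xi> 1 x + b * \<xi> 3 x + c * \<xi> 5 x)"
    by blast
  let ?\<zeta> = "\<lambda>x. (-a) * \<xi> 4 x + (-b) * \<xi> 6 x + (-c) * \<xi> 2 x"
  show "\<eta> \<in> decomposing_covectors cyclic_form"
  proof (rule decomposing_covectorsI[where as = "[\<xi> 1, \<xi> 3, \<xi> 5, ?\<zeta>]"])
    show "linear \<eta>"
      unfolding \<eta> by (rule linear_combination3) simp_all
    have "linear ?\<zeta>"
      by (rule linear_combination3) simp_all
    then show "\<forall>f\<in>set [\<xi> 1, \<xi> 3, \<xi> 5, ?\<zeta>]. linear f"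
      by (simp add: linear_coord)
    show "wedge1 \<eta> 3 cyclic_form v = wedge_list [\<xi> 1, \<xi> 3, \<xi> 5, ?\<zeta>] v" for v
      unfolding \<eta> cyclic_form_def
      by (simp add: wedge1_def wedge_list_Cons drop_arg_def numeral_eq_Suc) Groebner_Basis.algebra
  qed simp
qed

lemma decomposing_covectors_split:
  "decomposing_covectors split_form =
     {\<lambda>x. a * \<xi> 1 x + b * \<xi> 2 x + c * \<xi> 3 x | a b c. True}
     \<union> {\<lambda>x. a * \<xi> 4 x + b * \<xi> 5 x + c * \<xi> 6 x | a b c. True}"
proof (intro Set.set_eqI iffI)
  fix \<eta> assume "\<eta> \<in> decomposing_covectors split_form"
  then have "linear \<eta>" and "decomposable 4 (wedge1 \<eta> 3 split_form)"
    by (auto simp: decomposing_covectors_def)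
  note pluecker = decomposable4_pluecker[OF this(2)]
  \<comment> \<open>Complete i to {1, 2, 3} and j to {4, 5, 6}.\<close>
  have vanish: "\<eta> (u i) = 0 \<or> \<eta> (u j) = 0" if "i \<in> {1, 2, 3}" "j \<in> {4, 5, 6}" for i j
    using that pluecker[of "u i" "u j" "u (if i = 1 then 2 else 1)" "u (if i = 3 then 2 else 3)"
        "u (if j = 4 then 5 else 4)" "u (if j = 6 then 5 else 6)"]
    by (auto simp: wedge1_args4 split_form_def wedge_list3_args4 dual)
  show "\<eta> \<in> {\<lambda>x. a * \<xi> 1 x + b * \<xi> 2 x + c * \<xi> 3 x | a b c. True}
     \<union> {\<lambda>x. a * \<xi> 4 x + b * \<xi> 5 x + c * \<xi> 6 x | a b c. True}"
  proof (cases "\<eta> (u 1) = 0 \<and> \<eta> (u 2) = 0 \<and> \<eta> (u 3) = 0")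
    case True
    then have "\<eta> = (\<lambda>x. \<eta> (u 4) * \<xi> 4 x + \<eta> (u 5) * \<xi> 5 x + \<eta> (u 6) * \<xi> 6 x)"
      using linear_expansion[OF \<open>linear \<eta>\<close>] by simp
    then show ?thesis
      by blast
  next
    case False
    then have "\<eta> (u 4) = 0 \<and> \<eta> (u 5) = 0 \<and> \<eta> (u 6) = 0"
      using vanish by blast
    then have "\<eta> = (\<lambda>x. \<eta> (u 1) * \<xi> 1 x + \<eta> (u 2) * \<xi> 2 x + \<eta> (u 3) * \<xi> 3 x)"
      using linear_expansion[OF \<open>linear \<eta>\<close>] by simp
    then show ?thesis
      by blast
  qed
next
  fix \<eta> assume "\<eta> \<in> {\<lambda>x. a * \<xi> 1 x + b * \<xi> 2 x + c * \<xi> 3 x | a b c. True}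
     \<union> {\<lambda>x. a * \<xi> 4 x + b * \<xi> 5 x + c * \<xi> 6 x | a b c. True}"
  then consider (first) a b c where "\<eta> = (\<lambda>x. a * \<xi> 1 x + b * \<xi> 2 x + c * \<xi> 3 x)"
    | (second) a b c where "\<eta> = (\<lambda>x. a * \<xi> 4 x + b * \<xi> 5 x + c * \<xi> 6 x)"
    by blast
  then show "\<eta> \<in> decomposing_covectors split_form"
  proof cases
    case first
    show ?thesis
    proof (rule decomposing_covectorsI[where as = "[\<eta>, \<xi> 4, \<xi> 5, \<xi> 6]"])
      show "linear \<eta>"
        unfolding first by (rule linear_combination3) simp_all
      then show "\<forall>f\<in>set [\<eta>, \<xi> 4, \<xi> 5, \<xi> 6]. linear f"
        by (simp add: linear_coord)
      show "wedge1 \<eta> 3 split_form v = wedge_list [\<eta>, \<xi> 4, \<xi> 5, \<xi> 6] v" for v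
        unfolding first split_form_def
        by (simp add: wedge1_def wedge_list_Cons drop_arg_def numeral_eq_Suc) Groebner_Basis.algebra
    qed simp
  next
    case second
    show ?thesis
    proof (rule decomposing_covectorsI[where as = "[\<eta>, \<xi> 1, \<xi> 2, \<xi> 3]"])
      show "linear \<eta>"
        unfolding second by (rule linear_combination3) simp_all
      then show "\<forall>f\<in>set [\<eta>, \<xi> 1, \<xi> 2, \<xi> 3]. linear f"
        by (simp add: linear_coord)
      show "wedge1 \<eta> 3 split_form v = wedge_list [\<eta>, \<xi> 1, \<xi> 2, \<xi> 3] v" for v
        unfolding second split_form_def
        by (simp add: wedge1_def wedge_list_Cons drop_arg_def numeral_eq_Suc) Groebner_Basis.algebra
    qed simp
  qed
qed

end

theorem lemma4p3:
  fixes \<xi> :: "nat \<Rightarrow> ('v::euclidean_space \<Rightarrow> real)"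
  assumes dim6: "DIM('v) = 6"
    and lin: "\<And>i. i \<in> {1..6} \<Longrightarrow> linear (\<xi> i)"
    and indep: "\<And>c. (\<forall>x. (\<Sum>i=1..6. c i * \<xi> i x) = 0) \<Longrightarrow> (\<forall>i\<in>{1..6}. c i = 0)"
  shows
    "(let \<mu> = (\<lambda>v. wedge_list [\<xi> 1, \<xi> 2, \<xi> 3] v + wedge_list [\<xi> 3, \<xi> 4, \<xi> 5] v
                    + wedge_list [\<xi> 5, \<xi> 6, \<xi> 1] v)
      in {\<eta>. linear \<eta> \<and> decomposable 4 (wedge1 \<eta> 3 \<mu>)}
         = {\<lambda>x. a * \<xi> 1 x + b * \<xi> 3 x + c * \<xi> 5 x | a b c. True})
   \<and>
    (let \<mu> = (\<lambda>v. wedge_list [\<xi> 1, \<xi> 2, \<xi> 3] v + wedge_list [\<xi> 4, \<xi> 5, \<xi> 6] v)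
      in {\<eta>. linear \<eta> \<and> decomposable 4 (wedge1 \<eta> 3 \<mu>)}
         = {\<lambda>x. a * \<xi> 1 x + b * \<xi> 2 x + c * \<xi> 3 x | a b c. True}
           \<union> {\<lambda>x. a * \<xi> 4 x + b * \<xi> 5 x + c * \<xi> 6 x | a b c. True})"
proof -
  have "card {1..6::nat} = DIM('v)"
    using dim6 by simp
  then obtain u
    where dual: "\<And>i j. i \<in> {1..6} \<Longrightarrow> j \<in> {1..6} \<Longrightarrow> \<xi> i (u j) = (if i = j then 1 else 0)"
      and expansion: "\<And>x. x = (\<Sum>j=1..6. \<xi> j x *\<^sub>R u j)"
    using dual_basis_exists[where \<xi> = \<xi> and I = "{1..6}"] lin indep by auto
  interpret dual_frame6 \<xi> u
    using lin dual expansion by (rule dual_frame6.intro)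
  have "(\<lambda>v. wedge_list [\<xi> 1, \<xi> 2, \<xi> 3] v + wedge_list [\<xi> 3, \<xi> 4, \<xi> 5] v
            + wedge_list [\<xi> 5, \<xi> 6, \<xi> 1] v) = cyclic_form"
    and "(\<lambda>v. wedge_list [\<xi> 1, \<xi> 2, \<xi> 3] v + wedge_list [\<xi> 4, \<xi> 5, \<xi> 6] v) = split_form"
    by (simp_all add: fun_eq_iff cyclic_form_def split_form_def)
  then show ?thesis
    unfolding Let_def decomposing_covectors_def[symmetric]
    using decomposing_covectors_cyclic decomposing_covectors_split by simp
qed

end
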